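(* Let $g\in\mathcal{H}(\mathbb{D})$ and let $L=L_1+g(0)P(g-g(0))\,\delta_0$, where \[ L_1=\sum_{k=1}^m\sum_{j=0}^k c_{j,k}S_g^jT_g^{k-j} \] is a $g$-operator of order $m\in\mathbb{N}$ and $P$ is a polynomial of degree less than $m$. Then there exists an increasing sequence $\{n_i\}_i$ in $\mathbb{N}$ such that $L[(g-g(0))^{n_i}]=P_i(g-g(0))$, where each $P_i$ is a polynomial of degree $m+n_i$.
   Context: $\mathcal{H}(\mathbb{D})$ is the space of analytic functions on the unit disc. For $g\in\mathcal{H}(\mathbb{D})$, operators on $\mathcal{H}(\mathbb{D})$: $M_gf=fg$, $T_gf(z)=\int_0^zf(\zeta)g'(\zeta)\,d\zeta$, $S_gf(z)=\int_0^zf'(\zeta)g(\zeta)\,d\zeta$, $\delta_0f=f(0)$; $h\,\delta_0$ denotes $f\mapsto f(0)h$; $S_g^0,T_g^0$ are the identity; $c_{j,k}\in\mathbb{C}$. A $g$-word with $m$ letters is a composition of $m$ operators from $\{M_g,S_g,T_g\}$; $\mathscr{A}_g^{(n)}$ is the linear span of $g$-words with at least one and at most $n$ letters; the order of a $g$-operator $L$ (element of the algebra generated by $M_g,S_g,T_g$) is the least $n\in\mathbb{N}$ with $L\in\mathscr{A}_g^{(n)}$. *)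

theory Defs
  imports "HOL-Complex_Analysis.Complex_Analysis" "HOL-Computational_Algebra.Polynomial"
begin

text \<open>Analytic functions on the unit disc are represented as functions
complex \<Rightarrow> complex that are holomorphic on ball 0 1; values outside the disc are
irrelevant.\<close>

definition M_op :: "(complex \<Rightarrow> complex) \<Rightarrow> (complex \<Rightarrow> complex) \<Rightarrow> (complex \<Rightarrow> complex)" where
  "M_op g f = (\<lambda>z. f z * g z)"

definition T_op :: "(complex \<Rightarrow> complex) \<Rightarrow> (complex \<Rightarrow> complex) \<Rightarrow> (complex \<Rightarrow> complex)" where
  "T_op g f = (\<lambda>z. contour_integral (linepath 0 z) (\<lambda>w. f w * deriv g w))"

definition S_op :: "(complex \<Rightarrow> complex) \<Rightarrow> (complex \<Rightarrow> complex) \<Rightarrow> (complex \<Rightarrow> complex)" where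
  "S_op g f = (\<lambda>z. contour_integral (linepath 0 z) (\<lambda>w. deriv f w * g w))"

datatype letter = LM | LS | LT

fun letter_op :: "(complex \<Rightarrow> complex) \<Rightarrow> letter \<Rightarrow> (complex \<Rightarrow> complex) \<Rightarrow> (complex \<Rightarrow> complex)" where
  "letter_op g LM = M_op g"
| "letter_op g LS = S_op g"
| "letter_op g LT = T_op g"

text \<open>A g-word: composition of the letters (first letter is applied last).\<close>
definition gword :: "(complex \<Rightarrow> complex) \<Rightarrow> letter list \<Rightarrow> (complex \<Rightarrow> complex) \<Rightarrow> (complex \<Rightarrow> complex)" where
  "gword g w = foldr (\<lambda>l h. letter_op g l \<circ> h) w id"

text \<open>The span of g-words with at least one and at most n letters, as operators on
H(D) (operator equality = equality on every analytic f, pointwise on the disc).\<close>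
definition g_span :: "(complex \<Rightarrow> complex) \<Rightarrow> nat \<Rightarrow>
    ((complex \<Rightarrow> complex) \<Rightarrow> (complex \<Rightarrow> complex)) set" where
  "g_span g n = {L. \<exists>ws :: letter list list. \<exists>c :: nat \<Rightarrow> complex.
     (\<forall>w\<in>set ws. 1 \<le> length w \<and> length w \<le> n) \<and>
     (\<forall>f. f holomorphic_on ball 0 1 \<longrightarrow>
        (\<forall>z\<in>ball 0 1. L f z = (\<Sum>i<length ws. c i * gword g (ws ! i) f z)))}"

definition g_order :: "(complex \<Rightarrow> complex) \<Rightarrow>
    ((complex \<Rightarrow> complex) \<Rightarrow> (complex \<Rightarrow> complex)) \<Rightarrow> nat" where
  "g_order g L = (LEAST n. L \<in> g_span g n)"

definition L1_op :: "(complex \<Rightarrow> complex) \<Rightarrow> (nat \<Rightarrow> nat \<Rightarrow> complex) \<Rightarrow> nat \<Rightarrow>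
    (complex \<Rightarrow> complex) \<Rightarrow> (complex \<Rightarrow> complex)" where
  "L1_op g c m f = (\<lambda>z. \<Sum>k=1..m. \<Sum>j=0..k. c j k * ((S_op g ^^ j) ((T_op g ^^ (k - j)) f)) z)"

end

theory Submission
  imports Defs
begin

text \<open>Write \<open>u = g - g 0\<close>. Both \<open>T\<^sub>g\<close> and \<open>S\<^sub>g\<close> map polynomials in \<open>u\<close> to
polynomials in \<open>u\<close>: \<open>T\<^sub>g (p \<circ> u) = (\<integral>p) \<circ> u\<close> and \<open>S\<^sub>g (p \<circ> u) = (\<integral>(X + g 0) p') \<circ> u\<close>,
where \<open>\<integral>\<close> is the antiderivative vanishing at 0. Hence \<open>L\<^sub>1 (u\<^sup>n) = Q\<^sub>n \<circ> u\<close> with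
\<open>deg Q\<^sub>n \<le> n + m\<close>, and tracking the coefficient of \<open>X\<^sup>n\<^sup>+\<^sup>m\<close> through the integrations shows
that \<open>(n+1)\<^sub>m\<close> times it equals \<open>R(n)\<close>, where \<open>R(x) = \<Sum>\<^sub>j c\<^sub>j\<^sub>,\<^sub>m (x+m-j)\<^sub>j\<close>
(rising factorials).
As \<open>L\<^sub>1\<close> has order \<open>m\<close>, some \<open>c\<^sub>j\<^sub>,\<^sub>m\<close> is nonzero, so \<open>R\<close> is a nonzero polynomial and
\<open>deg Q\<^sub>n = n + m\<close> for all but finitely many \<open>n\<close>. The \<open>\<delta>\<^sub>0\<close> term vanishes for \<open>n \<ge> 1\<close>
because \<open>u(0) = 0\<close>.\<close>

definition pintegral :: "'a::field_char_0 poly \<Rightarrow> 'a poly" where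
  "pintegral p = (\<Sum>i\<le>degree p. monom (coeff p i / of_nat (Suc i)) (Suc i))"

lemma coeff_pintegral:
  "coeff (pintegral p) n = (if n = 0 then 0 else coeff p (n - 1) / of_nat n)"
proof (cases n)
  case 0
  then show ?thesis by (simp add: pintegral_def coeff_sum coeff_monom)
next
  case (Suc k)
  have "coeff (pintegral p) n = (\<Sum>i\<le>degree p. if i = k then coeff p i / of_nat (Suc i) else 0)"
    by (simp add: pintegral_def coeff_sum coeff_monom Suc)
  also have "\<dots> = coeff p k / of_nat (Suc k)"
    using coeff_eq_0[of p k] by (auto simp: sum.delta)
  finally show ?thesis by (simp add: Suc)
qed

lemma coeff_pintegral_Suc: "of_nat (Suc n) * coeff (pintegral p) (Suc n) = coeff p n"
  by (simp add: coeff_pintegral del: of_nat_Suc)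

lemma pderiv_pintegral [simp]: "pderiv (pintegral p) = p"
  by (rule poly_eqI) (simp add: coeff_pderiv coeff_pintegral del: of_nat_Suc)

lemma poly_pintegral_0 [simp]: "poly (pintegral p) 0 = 0"
  by (simp add: poly_0_coeff_0 coeff_pintegral)

lemma degree_pintegral: "degree (pintegral p) \<le> degree p + 1"
  by (rule degree_le) (auto simp: coeff_pintegral coeff_eq_0)

lemma degree_pintegral_funpow: "degree ((pintegral ^^ i) p) \<le> degree p + i"
  by (induction i) (auto intro: order_trans[OF degree_pintegral])

lemma coeff_pintegral_funpow_monom:
  "pochhammer (of_nat n + 1) i * coeff ((pintegral ^^ i) (monom 1 n)) (n + i) = (1::'a::field_char_0)"
proof (induction i)
  case 0
  then show ?case by simp
next
  case (Suc i)
  have "pochhammer (of_nat n + 1) (Suc i) * coeff ((pintegral ^^ Suc i) (monom (1::'a) n)) (n + Suc i)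
      = pochhammer (of_nat n + 1) i *
          (of_nat (Suc (n + i)) * coeff (pintegral ((pintegral ^^ i) (monom 1 n))) (Suc (n + i)))"
    by (simp add: pochhammer_Suc algebra_simps)
  also have "\<dots> = 1"
    by (subst coeff_pintegral_Suc) (rule Suc.IH)
  finally show ?case .
qed

text \<open>The polynomial counterpart of \<open>S\<^sub>g\<close>: \<open>f' g = (p' \<circ> u) u' (u + a)\<close> with \<open>a = g 0\<close>.\<close>

definition S_poly :: "'a::field_char_0 \<Rightarrow> 'a poly \<Rightarrow> 'a poly" where
  "S_poly a q = pintegral ([:a, 1:] * pderiv q)"

lemma degree_S_poly: "degree (S_poly a q) \<le> degree q + 1"
proof -
  have "degree ([:a, 1:] * pderiv q) \<le> degree q"
  proof (cases "pderiv q = 0")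
    case False
    then have "degree q \<ge> 1"
      using pderiv_eq_0_iff by fastforce
    then show ?thesis
      using degree_mult_le[of "[:a, 1:]" "pderiv q"] degree_pderiv[of q] by simp
  qed simp
  then show ?thesis
    unfolding S_poly_def using degree_pintegral by (meson add_le_mono1 order_trans)
qed

lemma degree_S_poly_funpow: "degree ((S_poly a ^^ i) p) \<le> degree p + i"
  by (induction i) (auto intro: order_trans[OF degree_S_poly])

lemma coeff_S_poly_Suc:
  assumes "degree q \<le> d"
  shows "of_nat (Suc d) * coeff (S_poly a q) (Suc d) = of_nat d * coeff q d"
proof -
  have "of_nat (Suc d) * coeff (S_poly a q) (Suc d) = coeff ([:a, 1:] * pderiv q) d"
    unfolding S_poly_def by (rule coeff_pintegral_Suc)
  also have "\<dots> = a * coeff (pderiv q) d + (case d of 0 \<Rightarrow> 0 | Suc e \<Rightarrow> coeff (pderiv q) e)"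
    by (simp add: mult_pCons_left coeff_pCons split: nat.split)
  also have "\<dots> = of_nat d * coeff q d"
    using assms by (auto simp: coeff_pderiv coeff_eq_0 split: nat.split)
  finally show ?thesis .
qed

lemma coeff_S_poly_funpow:
  assumes "degree q \<le> d"
  shows "of_nat (d + j) * coeff ((S_poly a ^^ j) q) (d + j) = of_nat d * coeff q d"
proof (induction j)
  case (Suc j)
  have "degree ((S_poly a ^^ j) q) \<le> d + j"
    using degree_S_poly_funpow[where a=a and i=j and p=q] assms by simp
  then show ?case
    using coeff_S_poly_Suc Suc.IH by fastforce
qed simp

lemma coeff_S_poly_pintegral_funpow_monom:
  assumes "j \<le> k" "k \<ge> 1"
  shows "pochhammer (of_nat n + 1) k * coeff ((S_poly a ^^ j) ((pintegral ^^ (k - j)) (monom 1 n))) (n + k)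
         = pochhammer (of_nat (n + k - j) :: 'a::field_char_0) j"
proof -
  define q where "q = (pintegral ^^ (k - j)) (monom (1::'a) n)"
  define d where "d = n + k - j"
  have nk: "n + k = d + j"
    using assms unfolding d_def by simp
  have dq: "degree q \<le> d"
    using degree_pintegral_funpow[of "k - j" "monom (1::'a) n"] assms
    unfolding q_def d_def by (simp add: degree_monom_eq)
  have S: "of_nat (n + k) * coeff ((S_poly a ^^ j) q) (n + k) = of_nat d * coeff q d"
    using coeff_S_poly_funpow[OF dq, where j=j and a=a] nk by simp
  have T: "pochhammer (of_nat n + 1) (k - j) * coeff q d = 1"
    using coeff_pintegral_funpow_monom[of n "k - j"] assms unfolding q_def d_def by simp
  have split: "pochhammer (of_nat n + 1) k = pochhammer (of_nat n + 1) (k - j) * pochhammer (of_nat d + 1 :: 'a) j"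
    using pochhammer_product[of "k - j" k "of_nat n + 1 :: 'a"] assms unfolding d_def
    by (simp add: algebra_simps)
  have shift: "of_nat d * pochhammer (of_nat d + 1) j = pochhammer (of_nat d :: 'a) j * of_nat (n + k)"
    using pochhammer_rec[of "of_nat d :: 'a" j] pochhammer_Suc[of "of_nat d :: 'a" j] nk
    by (simp add: algebra_simps)
  have "of_nat (n + k) * (pochhammer (of_nat n + 1) k * coeff ((S_poly a ^^ j) q) (n + k))
      = of_nat d * pochhammer (of_nat d + 1) j * (pochhammer (of_nat n + 1) (k - j) * coeff q d)"
    using S split by (simp only: mult.assoc mult.left_commute[of "of_nat (n + k)"]) (simp add: algebra_simps)
  also have "\<dots> = of_nat (n + k) * pochhammer (of_nat d) j"
    by (simp add: T shift)
  finally show ?thesis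
    using assms unfolding q_def d_def by (simp del: of_nat_add add: of_nat_add[symmetric])
qed

lemma poly_pochhammer: "poly (pochhammer p j) x = pochhammer (poly p x) j"
  by (induction j) (simp_all add: pochhammer_Suc)

lemma degree_coeff_pochhammer_monic_linear:
  "degree (pochhammer [:b, 1:] j) = j \<and> coeff (pochhammer [:b :: 'a::idom, 1:] j) j = 1"
proof (induction j)
  case (Suc j)
  have eq: "pochhammer [:b, 1:] (Suc j) = pochhammer [:b, 1:] j * [:b + of_nat j, 1:]"
    by (simp add: pochhammer_Suc of_nat_poly)
  have nz: "pochhammer [:b, 1:] j \<noteq> 0"
    using Suc.IH by auto
  have "degree (pochhammer [:b, 1:] (Suc j)) = Suc j"
    unfolding eq using degree_mult_eq[OF nz, of "[:b + of_nat j, 1:]"] Suc.IH by simp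
  moreover have "coeff (pochhammer [:b, 1:] (Suc j)) (Suc j) = 1"
    using lead_coeff_mult[of "pochhammer [:b, 1:] j" "[:b + of_nat j, 1:]"] Suc.IH calculation
    unfolding eq by simp
  ultimately show ?case by simp
qed simp

text \<open>\<open>Q\<^sub>n\<close> with \<open>L\<^sub>1 (u\<^sup>n) = Q\<^sub>n \<circ> u\<close>, where \<open>a = g 0\<close>, and the polynomial \<open>R\<close> of the header.\<close>

definition L1_poly :: "'a::field_char_0 \<Rightarrow> (nat \<Rightarrow> nat \<Rightarrow> 'a) \<Rightarrow> nat \<Rightarrow> nat \<Rightarrow> 'a poly" where
  "L1_poly a c m n =
     (\<Sum>k=1..m. \<Sum>j=0..k. smult (c j k) ((S_poly a ^^ j) ((pintegral ^^ (k - j)) (monom 1 n))))"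

definition L1_leading_poly :: "(nat \<Rightarrow> nat \<Rightarrow> 'a::field_char_0) \<Rightarrow> nat \<Rightarrow> 'a poly" where
  "L1_leading_poly c m = (\<Sum>j\<le>m. smult (c j m) (pochhammer [:of_nat (m - j), 1:] j))"

lemma L1_leading_poly_nonzero:
  assumes "\<exists>j\<le>m. c j m \<noteq> 0"
  shows "L1_leading_poly c m \<noteq> 0"
proof -
  define J where "J = Max {j. j \<le> m \<and> c j m \<noteq> 0}"
  have J: "J \<le> m" "c J m \<noteq> 0"
    using Max_in[of "{j. j \<le> m \<and> c j m \<noteq> 0}"] assms unfolding J_def by auto
  have above_J: "c j m = 0" if "J < j" "j \<le> m" for j
    using Max_ge[of "{j. j \<le> m \<and> c j m \<noteq> 0}" j] that unfolding J_def by fastforce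
  have "coeff (L1_leading_poly c m) J = (\<Sum>j\<le>m. c j m * coeff (pochhammer [:of_nat (m - j), 1:] j) J)"
    by (simp add: L1_leading_poly_def coeff_sum)
  also have "\<dots> = (\<Sum>j\<le>m. if j = J then c J m else 0)"
  proof (rule sum.cong)
    fix j assume "j \<in> {..m}"
    moreover have "coeff (pochhammer [:of_nat (m - j), 1:] j) J = (0::'a)" if "j < J"
      using that degree_coeff_pochhammer_monic_linear[of "of_nat (m - j) :: 'a" j] by (auto intro!: coeff_eq_0)
    ultimately show "c j m * coeff (pochhammer [:of_nat (m - j), 1:] j) J = (if j = J then c J m else 0)"
      using above_J[of j] degree_coeff_pochhammer_monic_linear[of "of_nat (m - J) :: 'a" J]
      by (cases j J rule: linorder_cases) auto
  qed simp
  also have "\<dots> = c J m"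
    using J by simp
  finally show ?thesis
    using J by auto
qed

lemma poly_L1_leading_poly:
  "poly (L1_leading_poly c m) (of_nat n) = (\<Sum>j\<le>m. c j m * pochhammer (of_nat (n + m - j)) j)"
  unfolding L1_leading_poly_def poly_sum poly_smult poly_pochhammer
proof (intro sum.cong refl)
  fix j assume "j \<in> {..m}"
  then have "poly [:of_nat (m - j), 1:] (of_nat n) = (of_nat (n + m - j) :: 'a)"
    by (simp add: of_nat_diff algebra_simps)
  then show "c j m * pochhammer (poly [:of_nat (m - j), 1:] (of_nat n)) j
      = c j m * pochhammer (of_nat (n + m - j)) j"
    by (simp only:)
qed

lemma degree_S_poly_pintegral_funpow_monom:
  "j \<le> k \<Longrightarrow> degree ((S_poly a ^^ j) ((pintegral ^^ (k - j)) (monom 1 n))) \<le> n + k"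
  using degree_S_poly_funpow[where a=a and i=j and p="(pintegral ^^ (k - j)) (monom 1 n)"]
    degree_pintegral_funpow[where i="k - j" and p="monom (1::'a) n"]
  by (simp add: degree_monom_eq)

lemma degree_L1_poly_le: "degree (L1_poly a c m n) \<le> n + m"
  unfolding L1_poly_def
  by (intro degree_sum_le order_trans[OF degree_smult_le]) (auto intro: order_trans[OF degree_S_poly_pintegral_funpow_monom])

lemma coeff_L1_poly_top:
  assumes "m \<ge> 1"
  shows "pochhammer (of_nat n + 1) m * coeff (L1_poly a c m n) (n + m) = poly (L1_leading_poly c m) (of_nat n)"
proof -
  have lower: "coeff (smult (c j k) ((S_poly a ^^ j) ((pintegral ^^ (k - j)) (monom 1 n)))) (n + m) = 0"
    if "j \<le> k" "k < m" for j k
    using that degree_S_poly_pintegral_funpow_monom[of j k a n] by (simp add: coeff_eq_0)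
  have "{1..m} = insert m {1..<m}"
    using assms by auto
  then have "coeff (L1_poly a c m n) (n + m)
      = (\<Sum>j=0..m. c j m * coeff ((S_poly a ^^ j) ((pintegral ^^ (m - j)) (monom 1 n))) (n + m))"
    unfolding L1_poly_def coeff_sum using lower by (simp add: sum.neutral)
  then have "pochhammer (of_nat n + 1) m * coeff (L1_poly a c m n) (n + m)
      = (\<Sum>j=0..m. c j m * (pochhammer (of_nat n + 1) m *
           coeff ((S_poly a ^^ j) ((pintegral ^^ (m - j)) (monom 1 n))) (n + m)))"
    by (simp add: sum_distrib_left algebra_simps)
  also have "\<dots> = (\<Sum>j=0..m. c j m * pochhammer (of_nat (n + m - j)) j)"
    using coeff_S_poly_pintegral_funpow_monom assms by (intro sum.cong) auto
  finally show ?thesis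
    by (simp add: poly_L1_leading_poly atLeast0AtMost)
qed

lemma degree_L1_poly:
  assumes "m \<ge> 1" "poly (L1_leading_poly c m) (of_nat n) \<noteq> 0"
  shows "degree (L1_poly a c m n) = n + m"
proof -
  have "coeff (L1_poly a c m n) (n + m) \<noteq> 0"
    using coeff_L1_poly_top[OF assms(1), of n a c] assms(2) by auto
  then show ?thesis
    using le_degree degree_L1_poly_le by (metis antisym)
qed

lemma has_field_derivative_poly_comp:
  assumes "g holomorphic_on ball 0 1" "w \<in> ball 0 1"
  shows "((\<lambda>w. poly p (g w - g 0)) has_field_derivative poly (pderiv p) (g w - g 0) * deriv g w) (at w)"
proof -
  have "((\<lambda>w. g w - g 0) has_field_derivative deriv g w) (at w)"
    using holomorphic_derivI[OF assms(1) open_ball assms(2)] by (auto intro!: derivative_eq_intros)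
  from DERIV_chain2[OF poly_DERIV this] show ?thesis .
qed

lemma contour_integral_poly_comp_deriv:
  assumes g: "g holomorphic_on ball 0 1" and z: "z \<in> ball 0 1"
    and h: "\<And>w. w \<in> ball 0 1 \<Longrightarrow> h w = poly p (g w - g 0) * deriv g w"
  shows "contour_integral (linepath 0 z) h = poly (pintegral p) (g z - g 0)"
proof -
  have seg: "path_image (linepath 0 z) \<subseteq> ball 0 1"
    using z by (simp add: closed_segment_subset convex_ball)
  have "((\<lambda>w. poly (pintegral p) (g w - g 0)) has_field_derivative h w) (at w within ball 0 1)"
    if "w \<in> ball 0 1" for w
    using has_field_derivative_poly_comp[OF g that, of "pintegral p"] h[OF that]
    by (simp add: has_field_derivative_at_within)
  from contour_integral_primitive[OF this _ seg]
  have "(h has_contour_integral poly (pintegral p) (g z - g 0)) (linepath 0 z)"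
    by simp
  then show ?thesis
    by (rule contour_integral_unique)
qed

lemma T_op_poly_comp:
  assumes "g holomorphic_on ball 0 1" "z \<in> ball 0 1"
    and "\<And>w. w \<in> ball 0 1 \<Longrightarrow> f w = poly p (g w - g 0)"
  shows "T_op g f z = poly (pintegral p) (g z - g 0)"
  unfolding T_op_def by (rule contour_integral_poly_comp_deriv[OF assms(1,2)]) (simp add: assms(3))

lemma S_op_poly_comp:
  assumes g: "g holomorphic_on ball 0 1" and z: "z \<in> ball 0 1"
    and f: "\<And>w. w \<in> ball 0 1 \<Longrightarrow> f w = poly p (g w - g 0)"
  shows "S_op g f z = poly (S_poly (g 0) p) (g z - g 0)"
  unfolding S_op_def S_poly_def
proof (rule contour_integral_poly_comp_deriv[OF g z])
  fix w :: complex assume w: "w \<in> ball 0 1"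
  have "(f has_field_derivative poly (pderiv p) (g w - g 0) * deriv g w) (at w)"
    using has_field_derivative_poly_comp[OF g w]
    by (rule has_field_derivative_transform_within_open[OF _ open_ball w]) (simp add: f)
  then show "deriv f w * g w = poly ([:g 0, 1:] * pderiv p) (g w - g 0) * deriv g w"
    by (simp add: DERIV_imp_deriv algebra_simps)
qed

lemma funpow_T_op_poly_comp:
  assumes "g holomorphic_on ball 0 1" "z \<in> ball 0 1"
    and "\<And>w. w \<in> ball 0 1 \<Longrightarrow> f w = poly p (g w - g 0)"
  shows "(T_op g ^^ i) f z = poly ((pintegral ^^ i) p) (g z - g 0)"
  using assms(2) by (induction i arbitrary: z) (auto simp: assms(3) intro!: T_op_poly_comp[OF assms(1)])

lemma funpow_S_op_poly_comp:
  assumes "g holomorphic_on ball 0 1" "z \<in> ball 0 1"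
    and "\<And>w. w \<in> ball 0 1 \<Longrightarrow> f w = poly p (g w - g 0)"
  shows "(S_op g ^^ i) f z = poly ((S_poly (g 0) ^^ i) p) (g z - g 0)"
  using assms(2) by (induction i arbitrary: z) (auto simp: assms(3) intro!: S_op_poly_comp[OF assms(1)])

lemma L1_op_power_comp:
  assumes g: "g holomorphic_on ball 0 1" and z: "z \<in> ball 0 1"
  shows "L1_op g c m (\<lambda>w. (g w - g 0) ^ n) z = poly (L1_poly (g 0) c m n) (g z - g 0)"
proof -
  have "(S_op g ^^ j) ((T_op g ^^ i) (\<lambda>w. (g w - g 0) ^ n)) z
      = poly ((S_poly (g 0) ^^ j) ((pintegral ^^ i) (monom 1 n))) (g z - g 0)" for i j
    by (intro funpow_S_op_poly_comp[OF g z] funpow_T_op_poly_comp[OF g]) (simp_all add: poly_monom)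
  then show ?thesis
    unfolding L1_op_def L1_poly_def by (simp add: poly_sum)
qed

lemma zero_in_g_span: "(\<lambda>f z. 0) \<in> g_span g n"
  unfolding g_span_def by (intro CollectI exI[of _ "[]"]) simp

lemma gword_in_g_span:
  assumes "1 \<le> length w" "length w \<le> n"
  shows "gword g w \<in> g_span g n"
  unfolding g_span_def using assms by (intro CollectI exI[of _ "[w]"] exI[of _ "\<lambda>_. 1"]) auto

lemma scale_in_g_span:
  assumes "L \<in> g_span g n"
  shows "(\<lambda>f z. a * L f z) \<in> g_span g n"
proof -
  obtain ws c where "\<forall>w\<in>set ws. 1 \<le> length w \<and> length w \<le> n"
    and "\<forall>f. f holomorphic_on ball 0 1 \<longrightarrow>
           (\<forall>z\<in>ball 0 1. L f z = (\<Sum>i<length ws. c i * gword g (ws ! i) f z))"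
    using assms unfolding g_span_def by blast
  then show ?thesis
    unfolding g_span_def
    by (intro CollectI exI[of _ ws] exI[of _ "\<lambda>i. a * c i"]) (simp add: sum_distrib_left mult.assoc)
qed

lemma add_in_g_span:
  assumes "L \<in> g_span g n" "K \<in> g_span g n"
  shows "(\<lambda>f z. L f z + K f z) \<in> g_span g n"
proof -
  obtain ws c where ws: "\<forall>w\<in>set ws. 1 \<le> length w \<and> length w \<le> n"
    and L: "\<forall>f. f holomorphic_on ball 0 1 \<longrightarrow>
              (\<forall>z\<in>ball 0 1. L f z = (\<Sum>i<length ws. c i * gword g (ws ! i) f z))"
    using assms(1) unfolding g_span_def by blast
  obtain vs d where vs: "\<forall>w\<in>set vs. 1 \<le> length w \<and> length w \<le> n"
    and K: "\<forall>f. f holomorphic_on ball 0 1 \<longrightarrow>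
              (\<forall>z\<in>ball 0 1. K f z = (\<Sum>i<length vs. d i * gword g (vs ! i) f z))"
    using assms(2) unfolding g_span_def by blast
  define e where "e i = (if i < length ws then c i else d (i - length ws))" for i
  have "(\<Sum>i<length (ws @ vs). e i * gword g ((ws @ vs) ! i) f z)
      = (\<Sum>i<length ws. c i * gword g (ws ! i) f z) + (\<Sum>i<length vs. d i * gword g (vs ! i) f z)"
    for f z
  proof -
    let ?h = "\<lambda>i. e i * gword g ((ws @ vs) ! i) f z"
    have "(\<Sum>i<length (ws @ vs). ?h i) = sum ?h {0..<length ws} + sum ?h {0 + length ws..<length vs + length ws}"
      by (simp add: lessThan_atLeast0 sum.atLeastLessThan_concat add.commute)
    also have "\<dots> = sum ?h {0..<length ws} + (\<Sum>i=0..<length vs. ?h (i + length ws))"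
      by (simp only: sum.shift_bounds_nat_ivl)
    also have "sum ?h {0..<length ws} = (\<Sum>i<length ws. c i * gword g (ws ! i) f z)"
      by (auto simp: e_def nth_append lessThan_atLeast0 intro!: sum.cong)
    also have "(\<Sum>i=0..<length vs. ?h (i + length ws)) = (\<Sum>i<length vs. d i * gword g (vs ! i) f z)"
      by (simp add: e_def nth_append lessThan_atLeast0)
    finally show ?thesis .
  qed
  then show ?thesis
    unfolding g_span_def using ws vs L K
    by (intro CollectI exI[of _ "ws @ vs"] exI[of _ e]) auto
qed

lemma sum_in_g_span:
  assumes "finite A" "\<And>x. x \<in> A \<Longrightarrow> L x \<in> g_span g n"
  shows "(\<lambda>f z. \<Sum>x\<in>A. L x f z) \<in> g_span g n"
  using assms by (induction A rule: finite_induct) (simp_all add: zero_in_g_span add_in_g_span)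

lemma gword_replicate_S_T:
  "gword g (replicate j LS @ replicate i LT) f = (S_op g ^^ j) ((T_op g ^^ i) f)"
proof -
  have replicate: "gword g (replicate k l @ w) f = (letter_op g l ^^ k) (gword g w f)" for k l w
    by (induction k) (simp_all add: gword_def)
  have "gword g (replicate i LT) f = (T_op g ^^ i) f"
    using replicate[of i LT "[]"] by (simp add: gword_def)
  then show ?thesis
    by (simp add: replicate)
qed

lemma L1_op_in_g_span: "L1_op g c m \<in> g_span g m"
proof -
  have "(\<lambda>f z. \<Sum>k\<in>{1..m}. \<Sum>j\<in>{0..k}. c j k * gword g (replicate j LS @ replicate (k - j) LT) f z)
        \<in> g_span g m"
    by (intro sum_in_g_span scale_in_g_span gword_in_g_span) auto
  then show ?thesis
    unfolding L1_op_def gword_replicate_S_T .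
qed

lemma L1_op_Suc_top_zero:
  assumes "\<forall>j\<le>Suc m. c j (Suc m) = 0"
  shows "L1_op g c (Suc m) = L1_op g c m"
  using assms by (simp add: L1_op_def fun_eq_iff)

lemma L1_op_top_coeff_nonzero:
  assumes "g_order g (L1_op g c m) = m" "m \<ge> 1"
  shows "\<exists>j\<le>m. c j m \<noteq> 0"
proof (rule ccontr)
  assume "\<not> ?thesis"
  moreover obtain m' where m': "m = Suc m'"
    using assms(2) by (cases m) auto
  ultimately have "L1_op g c m \<in> g_span g m'"
    using L1_op_Suc_top_zero L1_op_in_g_span by auto
  then have "g_order g (L1_op g c m) \<le> m'"
    unfolding g_order_def by (rule Least_le)
  then show False
    using assms(1) m' by simp
qed

lemma infinite_of_nat_non_roots:
  fixes R :: "'a::field_char_0 poly"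
  assumes "R \<noteq> 0"
  shows "infinite {n. 1 \<le> n \<and> poly R (of_nat n) \<noteq> 0}"
proof -
  have "finite (of_nat -` {x. poly R x = 0} :: nat set)"
    using poly_roots_finite[OF assms] by (rule finite_vimageI) (simp add: inj_on_def)
  moreover have "{n. 1 \<le> n \<and> poly R (of_nat n) \<noteq> 0} = UNIV - ({0} \<union> of_nat -` {x. poly R x = 0})"
    by auto
  ultimately show ?thesis
    by (simp add: Diff_infinite_finite)
qed

theorem proposition3p7:
  fixes g :: "complex \<Rightarrow> complex" and c :: "nat \<Rightarrow> nat \<Rightarrow> complex"
    and m :: nat and P :: "complex poly"
  assumes "g holomorphic_on ball 0 1"
    and "m \<ge> 1"
    and "g_order g (L1_op g c m) = m"
    and "degree P < m"
  shows "\<exists>n :: nat \<Rightarrow> nat. strict_mono n \<and>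
           (\<forall>i. \<exists>Pi :: complex poly. degree Pi = m + n i \<and>
              (\<forall>z\<in>ball 0 1.
                 L1_op g c m (\<lambda>w. (g w - g 0) ^ n i) z
                 + g 0 * poly P (g z - g 0) * (g 0 - g 0) ^ n i
                 = poly Pi (g z - g 0)))"
proof -
  define A where "A = {n. 1 \<le> n \<and> poly (L1_leading_poly c m) (of_nat n) \<noteq> (0::complex)}"
  have "infinite A"
    unfolding A_def using L1_leading_poly_nonzero L1_op_top_coeff_nonzero[OF assms(3,2)]
    by (intro infinite_of_nat_non_roots)
  then have "strict_mono (enumerate A)" "enumerate A i \<in> A" for i
    by (simp_all add: strict_mono_enumerate enumerate_in_set)
  moreover have "degree (L1_poly (g 0) c m n) = m + n" "(g 0 - g 0) ^ n = 0" if "n \<in> A" for n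
    using that degree_L1_poly[OF assms(2), of c n "g 0"] unfolding A_def by (auto simp: add.commute)
  ultimately show ?thesis
    using L1_op_power_comp[OF assms(1)]
    by (intro exI[of _ "enumerate A"]) (auto intro!: exI[of _ "L1_poly (g 0) c m (enumerate A _)"])
qed

end
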